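(* Let $\{G_i\}$ be a family of connected graphs with common induced subgraph $J$, embedded as $J_i\subseteq G_i$, and let $H=\amalg\{(G_i|J_i)\}$. If $a\in V(H)$ and $uv\in\parallel(J_i:G_i)$ satisfy $d_H(a,u)\neq d_H(a,v)$, then $a\in V(G_i-J_i)$.
   Context: All graphs are finite, simple, non-null and connected; $d_G$ is shortest-path distance in $G$. $J$ is a common induced subgraph of each $G_i$ via injective maps $\iota_i:V(J)\to V(G_i)$ with $\iota_i(x)\iota_i(y)\in E(G_i)$ iff $xy\in E(J)$; $J_i$ is the subgraph of $G_i$ induced by $\iota_i(V(J))$. The $J$-amalgamation $H=\amalg\{(G_i|J_i)\}$ is obtained from the disjoint union of the $G_i$ by identifying, for each $x\in V(J)$, all vertices $\iota_i(x)$ into a single vertex; each $G_i$ is regarded as a subgraph of $H$, so $V(H)=V(J)\cup\bigcup_iV(G_i-J_i)$. $\parallel(J_i:G_i)$ denotes the set of edges $uv$ of $G_i-J_i$ (both ends outside $V(J_i)$) such that $d_{G_i}(w,u)=d_{G_i}(w,v)$ for every $w\in V(J_i)$. *)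

theory Defs
  imports Main
begin

definition graph :: "'v set \<Rightarrow> ('v \<times> 'v) set \<Rightarrow> bool" where
  "graph V E \<longleftrightarrow> finite V \<and> E \<subseteq> V \<times> V \<and> sym E \<and> irrefl E"

definition walk :: "'v set \<Rightarrow> ('v \<times> 'v) set \<Rightarrow> 'v list \<Rightarrow> bool" where
  "walk V E xs \<longleftrightarrow> xs \<noteq> [] \<and> set xs \<subseteq> V \<and>
     (\<forall>k. Suc k < length xs \<longrightarrow> (xs ! k, xs ! Suc k) \<in> E)"

definition connected_graph :: "'v set \<Rightarrow> ('v \<times> 'v) set \<Rightarrow> bool" where
  "connected_graph V E \<longleftrightarrow> graph V E \<and> V \<noteq> {} \<and>
     (\<forall>u\<in>V. \<forall>v\<in>V. \<exists>xs. walk V E xs \<and> hd xs = u \<and> last xs = v)"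

definition dist :: "'v set \<Rightarrow> ('v \<times> 'v) set \<Rightarrow> 'v \<Rightarrow> 'v \<Rightarrow> nat" where
  "dist V E u v = (LEAST n. \<exists>xs. walk V E xs \<and> hd xs = u \<and> last xs = v \<and> length xs = Suc n)"

text \<open>Vertices of H are
Inl x for x \<in> VJ (the identified copies) and Inr (i, v) for v \<in> V(G_i - J_i).\<close>

definition amalg_emb :: "'j set \<Rightarrow> ('i \<Rightarrow> 'j \<Rightarrow> 'v) \<Rightarrow> 'i \<Rightarrow> 'v \<Rightarrow> 'j + ('i \<times> 'v)" where
  "amalg_emb VJ \<iota> i v =
     (if v \<in> \<iota> i ` VJ then Inl (the_inv_into VJ (\<iota> i) v) else Inr (i, v))"

definition amalg_V :: "'i set \<Rightarrow> ('i \<Rightarrow> 'v set) \<Rightarrow> 'j set \<Rightarrow> ('i \<Rightarrow> 'j \<Rightarrow> 'v)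
    \<Rightarrow> ('j + ('i \<times> 'v)) set" where
  "amalg_V I V VJ \<iota> = Inl ` VJ \<union> (\<Union>i\<in>I. amalg_emb VJ \<iota> i ` V i)"

definition amalg_E :: "'i set \<Rightarrow> ('i \<Rightarrow> ('v \<times> 'v) set) \<Rightarrow> 'j set \<Rightarrow> ('i \<Rightarrow> 'j \<Rightarrow> 'v)
    \<Rightarrow> (('j + ('i \<times> 'v)) \<times> ('j + ('i \<times> 'v))) set" where
  "amalg_E I E VJ \<iota> =
     (\<Union>i\<in>I. (\<lambda>(u, v). (amalg_emb VJ \<iota> i u, amalg_emb VJ \<iota> i v)) ` E i)"

definition par_edges :: "'j set \<Rightarrow> ('j \<Rightarrow> 'v) \<Rightarrow> 'v set \<Rightarrow> ('v \<times> 'v) set \<Rightarrow> ('v \<times> 'v) set" where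
  "par_edges VJ \<iota>i Vi Ei =
     {(u, v) \<in> Ei. u \<notin> \<iota>i ` VJ \<and> v \<notin> \<iota>i ` VJ \<and>
        (\<forall>w\<in>\<iota>i ` VJ. dist Vi Ei w u = dist Vi Ei w v)}"

end

theory Submission imports Defs begin

text \<open>Let a be a vertex of H outside G_i - J_i. A walk from a to a vertex x of G_i - J_i
enters G_i - J_i for the last time from some vertex w of J, and from there on it is a walk
of G_i. Hence d_H(a, x) is the minimum over w in J of d_H(a, w) + d_G_i(w, x), so two
vertices of G_i - J_i that are equidistant in G_i from every vertex of J_i are also
equidistant from a in H.\<close>

definition reachable :: "'v set \<Rightarrow> ('v \<times> 'v) set \<Rightarrow> 'v \<Rightarrow> 'v \<Rightarrow> bool" where
  "reachable V E p q \<longleftrightarrow> (\<exists>xs. walk V E xs \<and> hd xs = p \<and> last xs = q)"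

lemma walk_single [simp]: "walk V E [x] \<longleftrightarrow> x \<in> V"
  by (simp add: walk_def)

lemma walk_Cons_Cons:
  "walk V E (x # y # zs) \<longleftrightarrow> x \<in> V \<and> (x, y) \<in> E \<and> walk V E (y # zs)"
  by (auto simp: walk_def less_Suc_eq_0_disj)

lemma walk_append_iff:
  assumes "xs \<noteq> []" "ys \<noteq> []"
  shows "walk V E (xs @ ys) \<longleftrightarrow> walk V E xs \<and> walk V E ys \<and> (last xs, hd ys) \<in> E"
  using assms(1)
proof (induction xs rule: list_nonempty_induct)
  case (single x)
  then show ?case using assms(2) by (cases ys) (auto simp: walk_Cons_Cons)
next
  case (cons x xs)
  then show ?case by (cases xs) (auto simp: walk_Cons_Cons)
qed

lemma walk_join:
  assumes "walk V E xs" "walk V E ys" "last xs = hd ys"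
  shows "walk V E (xs @ tl ys)" and "hd (xs @ tl ys) = hd xs" and "last (xs @ tl ys) = last ys"
proof -
  have ne: "xs \<noteq> []" "ys \<noteq> []" using assms(1,2) by (auto simp: walk_def)
  then show "hd (xs @ tl ys) = hd xs" "last (xs @ tl ys) = last ys"
    using assms(3) by (cases ys; auto simp: last_append)+
  show "walk V E (xs @ tl ys)"
  proof (cases "tl ys = []")
    case False
    have "walk V E (tl ys) \<and> (hd ys, hd (tl ys)) \<in> E"
      using assms(2) ne(2) walk_append_iff[of "[hd ys]" "tl ys"] False by (cases ys) auto
    then show ?thesis using assms(1,3) ne(1) False walk_append_iff[of xs "tl ys"] by auto
  qed (use assms(1) in simp)
qed

lemma walk_map:
  assumes "walk V E xs" "\<And>x. x \<in> V \<Longrightarrow> f x \<in> V'" "\<And>p q. (p, q) \<in> E \<Longrightarrow> (f p, f q) \<in> E'"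
  shows "walk V' E' (map f xs)"
  using assms unfolding walk_def by auto

lemma dist_le_walk:
  assumes "walk V E xs" "hd xs = p" "last xs = q"
  shows "dist V E p q \<le> length xs - 1"
  unfolding dist_def by (rule Least_le) (use assms in \<open>auto simp: walk_def\<close>)

lemma shortest_walk:
  assumes "reachable V E p q"
  obtains xs where "walk V E xs" "hd xs = p" "last xs = q" "length xs = Suc (dist V E p q)"
proof -
  obtain xs where "walk V E xs" "hd xs = p" "last xs = q"
    using assms unfolding reachable_def by blast
  then have "\<exists>n ys. walk V E ys \<and> hd ys = p \<and> last ys = q \<and> length ys = Suc n"
    by (intro exI[of _ "length xs - 1"] exI[of _ xs]) (auto simp: walk_def)
  then show ?thesis
    using that LeastI_ex[where P = "\<lambda>n. \<exists>ys. walk V E ys \<and> hd ys = p \<and> last ys = q \<and> length ys = Suc n"]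
    unfolding dist_def by blast
qed

lemma reachable_trans:
  assumes "reachable V E p q" "reachable V E q r"
  shows "reachable V E p r"
proof -
  obtain xs ys where "walk V E xs" "hd xs = p" "last xs = q" "walk V E ys" "hd ys = q" "last ys = r"
    using assms unfolding reachable_def by blast
  then show ?thesis
    unfolding reachable_def using walk_join by metis
qed

lemma dist_triangle:
  assumes "reachable V E p q" "reachable V E q r"
  shows "dist V E p r \<le> dist V E p q + dist V E q r"
proof -
  obtain xs where xs: "walk V E xs" "hd xs = p" "last xs = q" "length xs = Suc (dist V E p q)"
    using shortest_walk[OF assms(1)] .
  obtain ys where ys: "walk V E ys" "hd ys = q" "last ys = r" "length ys = Suc (dist V E q r)"
    using shortest_walk[OF assms(2)] .
  have "dist V E p r \<le> length (xs @ tl ys) - 1"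
    using walk_join[OF xs(1) ys(1)] xs(2,3) ys(2,3) by (intro dist_le_walk) auto
  then show ?thesis using xs(4) ys(4) by simp
qed

lemma
  assumes "\<And>x. x \<in> V \<Longrightarrow> f x \<in> V'" "\<And>p q. (p, q) \<in> E \<Longrightarrow> (f p, f q) \<in> E'"
    and "reachable V E p q"
  shows reachable_map: "reachable V' E' (f p) (f q)"
    and dist_map_le: "dist V' E' (f p) (f q) \<le> dist V E p q"
proof -
  obtain xs where xs: "walk V E xs" "hd xs = p" "last xs = q" "length xs = Suc (dist V E p q)"
    using shortest_walk[OF assms(3)] .
  have "walk V' E' (map f xs)"
    using walk_map[OF xs(1)] assms(1,2) by blast
  moreover have "xs \<noteq> []" using xs(1) by (simp add: walk_def)
  ultimately have fxs: "walk V' E' (map f xs)" "hd (map f xs) = f p" "last (map f xs) = f q"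
    using xs(2,3) by (auto simp: hd_map last_map)
  then show "reachable V' E' (f p) (f q)"
    unfolding reachable_def by blast
  show "dist V' E' (f p) (f q) \<le> dist V E p q"
    using dist_le_walk[OF fxs] xs(4) by simp
qed

locale amalgamation =
  fixes I :: "'i set" and V :: "'i \<Rightarrow> 'v set" and E :: "'i \<Rightarrow> ('v \<times> 'v) set"
    and VJ :: "'j set" and \<iota> :: "'i \<Rightarrow> 'j \<Rightarrow> 'v"
  assumes connected: "\<And>k. k \<in> I \<Longrightarrow> connected_graph (V k) (E k)"
    and embedding: "\<And>k. k \<in> I \<Longrightarrow> inj_on (\<iota> k) VJ \<and> \<iota> k ` VJ \<subseteq> V k"
    and core_nonempty: "VJ \<noteq> {}"
begin

abbreviation "emb k \<equiv> amalg_emb VJ \<iota> k"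
abbreviation "HV \<equiv> amalg_V I V VJ \<iota>"
abbreviation "HE \<equiv> amalg_E I E VJ \<iota>"

lemma emb_core: "k \<in> I \<Longrightarrow> w \<in> VJ \<Longrightarrow> emb k (\<iota> k w) = Inl w"
  unfolding amalg_emb_def using embedding[of k] by (simp add: the_inv_into_f_f)

lemma emb_eq_InrD: "emb k p = Inr (j, y) \<Longrightarrow> j = k \<and> y = p \<and> p \<notin> \<iota> k ` VJ"
  unfolding amalg_emb_def by (auto split: if_splits)

lemma emb_in_HV: "k \<in> I \<Longrightarrow> x \<in> V k \<Longrightarrow> emb k x \<in> HV"
  unfolding amalg_V_def by blast

lemma emb_in_HE: "k \<in> I \<Longrightarrow> (p, q) \<in> E k \<Longrightarrow> (emb k p, emb k q) \<in> HE"
  unfolding amalg_E_def by force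

lemma edges_in_V: "k \<in> I \<Longrightarrow> (p, q) \<in> E k \<Longrightarrow> p \<in> V k \<and> q \<in> V k"
  using connected[of k] unfolding connected_graph_def graph_def by blast

lemma Inr_in_HV_imp_private:
  assumes "Inr (k, y) \<in> HV"
  shows "Inr (k, y) \<in> emb k ` (V k - \<iota> k ` VJ)"
proof -
  obtain k' x where "x \<in> V k'" "Inr (k, y) = emb k' x"
    using assms unfolding amalg_V_def by auto
  then show ?thesis using emb_eq_InrD[of k' x k y] by auto
qed

lemma edge_into_private:
  assumes "(z, Inr (i, q)) \<in> HE"
  shows "\<exists>p. (p, q) \<in> E i \<and> z = emb i p"
proof -
  obtain k p q' where "(p, q') \<in> E k" "z = emb k p" "Inr (i, q) = emb k q'"
    using assms unfolding amalg_E_def by auto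
  then show ?thesis using emb_eq_InrD[of k q' i q] by auto
qed

lemma walk_private_lift:
  assumes "i \<in> I" "ys \<noteq> []" "walk HV HE (z # map (\<lambda>y. Inr (i, y)) ys)"
  shows "\<exists>p. walk (V i) (E i) (p # ys) \<and> z = emb i p"
  using assms(2,3)
proof (induction ys arbitrary: z rule: list_nonempty_induct)
  case (single y)
  then have "(z, Inr (i, y)) \<in> HE" by (simp add: walk_Cons_Cons)
  then obtain p where "(p, y) \<in> E i" "z = emb i p"
    using edge_into_private by blast
  then show ?case using edges_in_V[OF assms(1)] by (auto simp: walk_Cons_Cons)
next
  case (cons y ys)
  then have "(z, Inr (i, y)) \<in> HE" by (simp add: walk_Cons_Cons)
  then obtain p where p: "(p, y) \<in> E i" "z = emb i p"
    using edge_into_private by blast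
  obtain p' where "walk (V i) (E i) (p' # ys)" "Inr (i, y) = emb i p'"
    using cons by (auto simp: walk_Cons_Cons)
  then show ?case using p edges_in_V[OF assms(1)] emb_eq_InrD[of i p' i y]
    by (auto simp: walk_Cons_Cons)
qed

lemma reachable_in_component: "k \<in> I \<Longrightarrow> x \<in> V k \<Longrightarrow> y \<in> V k \<Longrightarrow> reachable (V k) (E k) x y"
  using connected[of k] unfolding connected_graph_def reachable_def by blast

lemma reachable_emb:
  assumes "k \<in> I" "x \<in> V k" "y \<in> V k"
  shows "reachable HV HE (emb k x) (emb k y)"
  by (rule reachable_map[OF _ _ reachable_in_component[OF assms]])
    (use assms(1) emb_in_HV emb_in_HE in auto)

lemma reachable_core:
  assumes "k0 \<in> I" "a \<in> HV" "w \<in> VJ"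
  shows "reachable HV HE a (Inl w)"
proof -
  from assms(2) consider w0 where "w0 \<in> VJ" "a = Inl w0" | k x where "k \<in> I" "x \<in> V k" "a = emb k x"
    unfolding amalg_V_def by blast
  then show ?thesis
  proof cases
    case 1
    then show ?thesis
      using reachable_emb[OF assms(1), of "\<iota> k0 w0" "\<iota> k0 w"] embedding[OF assms(1)] assms(3)
      by (simp add: emb_core[OF assms(1)] image_subset_iff)
  next
    case 2
    then show ?thesis
      using reachable_emb[of k x "\<iota> k w"] embedding[of k] assms(3) by (auto simp: emb_core)
  qed
qed

lemma dist_private_upper:
  assumes "i \<in> I" "a \<in> HV" "w \<in> VJ" "y \<in> V i"
  shows "dist HV HE a (emb i y) \<le> dist HV HE a (Inl w) + dist (V i) (E i) (\<iota> i w) y"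
proof -
  have w: "\<iota> i w \<in> V i" "emb i (\<iota> i w) = Inl w"
    using embedding[OF assms(1)] assms(3) emb_core[OF assms(1,3)] by auto
  have "dist HV HE (Inl w) (emb i y) \<le> dist (V i) (E i) (\<iota> i w) y"
    using dist_map_le[OF _ _ reachable_in_component[OF assms(1) w(1) assms(4)], of "emb i" HV HE]
      w(2) assms(1) emb_in_HV emb_in_HE by force
  moreover have "dist HV HE a (emb i y) \<le> dist HV HE a (Inl w) + dist HV HE (Inl w) (emb i y)"
    using dist_triangle reachable_core[OF assms(1-3)] reachable_emb[OF assms(1) w(1) assms(4)] w(2)
    by metis
  ultimately show ?thesis by simp
qed

lemma walk_last_entry:
  assumes "i \<in> I" "walk HV HE xs" "hd xs \<notin> range (\<lambda>y. Inr (i, y))" "last xs = Inr (i, x)"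
  obtains ys w zs where "xs = ys @ Inl w # map (\<lambda>y. Inr (i, y)) zs" "w \<in> VJ"
    "walk HV HE (ys @ [Inl w])" "walk (V i) (E i) (\<iota> i w # zs)" "zs \<noteq> []" "last zs = x"
proof -
  define private_part where "private_part = range (\<lambda>y. Inr (i, y) :: 'j + 'i \<times> 'v)"
  have "\<exists>z\<in>set xs. z \<notin> private_part"
    using assms(2,3) unfolding private_part_def by (auto simp: walk_def)
  then obtain ys z zs where split: "xs = ys @ z # zs" "z \<notin> private_part" "\<forall>y\<in>set zs. y \<in> private_part"
    using split_list_last_prop[of xs "\<lambda>z. z \<notin> private_part"] by blast
  have "zs \<noteq> []" using split assms(4) unfolding private_part_def by auto
  obtain zs' where zs': "zs = map (\<lambda>y. Inr (i, y)) zs'"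
    using split(3) ex_map_conv[of zs "\<lambda>y. Inr (i, y)"] unfolding private_part_def by blast
  have prefix: "walk HV HE (ys @ [z])" and "walk HV HE zs" "(z, hd zs) \<in> HE"
    using assms(2) walk_append_iff[of "ys @ [z]" zs] \<open>zs \<noteq> []\<close> split(1) by auto
  moreover have "z \<in> HV" using prefix by (simp add: walk_def)
  ultimately have suffix: "walk HV HE (z # zs)"
    using walk_append_iff[of "[z]" zs] \<open>zs \<noteq> []\<close> by simp
  obtain p where p: "walk (V i) (E i) (p # zs')" "z = emb i p"
    using walk_private_lift[OF assms(1)] suffix zs' \<open>zs \<noteq> []\<close> by blast
  have "p \<in> \<iota> i ` VJ"
    using split(2) p(2) unfolding private_part_def amalg_emb_def by auto
  then obtain w where w: "w \<in> VJ" "p = \<iota> i w" "z = Inl w"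
    using p(2) emb_core[OF assms(1)] by auto
  have "last zs' = x"
    using assms(4) split(1) zs' \<open>zs \<noteq> []\<close> by (simp add: last_map)
  then show ?thesis
    using that[of ys w zs'] split(1) zs' w prefix p(1) \<open>zs \<noteq> []\<close> by simp
qed

lemma dist_private_lower:
  assumes "i \<in> I" "a \<in> HV" "a \<notin> emb i ` (V i - \<iota> i ` VJ)" "x \<in> V i" "x \<notin> \<iota> i ` VJ"
  shows "\<exists>w\<in>VJ. dist HV HE a (Inl w) + dist (V i) (E i) (\<iota> i w) x \<le> dist HV HE a (emb i x)"
proof -
  have x: "emb i x = Inr (i, x)"
    using assms(5) unfolding amalg_emb_def by simp
  obtain w0 where w0: "w0 \<in> VJ" "\<iota> i w0 \<in> V i"
    using core_nonempty embedding[OF assms(1)] by blast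
  have "reachable HV HE a (emb i x)"
    using reachable_trans reachable_core[OF assms(1,2) w0(1)]
      reachable_emb[OF assms(1) w0(2) assms(4)] emb_core[OF assms(1) w0(1)] by metis
  then obtain xs where xs: "walk HV HE xs" "hd xs = a" "last xs = Inr (i, x)"
    "length xs = Suc (dist HV HE a (emb i x))"
    using shortest_walk x by metis
  have "a \<notin> range (\<lambda>y. Inr (i, y))"
    using assms(2,3) Inr_in_HV_imp_private[of i] by auto
  then obtain ys w zs where split: "xs = ys @ Inl w # map (\<lambda>y. Inr (i, y)) zs" "w \<in> VJ"
    and prefix: "walk HV HE (ys @ [Inl w])" and suffix: "walk (V i) (E i) (\<iota> i w # zs)"
    and "zs \<noteq> []" "last zs = x"
    using walk_last_entry[OF assms(1) xs(1)] xs(2,3) by metis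
  have "dist HV HE a (Inl w) \<le> length ys"
    using dist_le_walk[OF prefix] xs(2) split(1) by (cases ys) auto
  moreover have "dist (V i) (E i) (\<iota> i w) x \<le> length zs"
    using dist_le_walk[OF suffix] \<open>zs \<noteq> []\<close> \<open>last zs = x\<close> by simp
  ultimately show ?thesis
    using split xs(4) by (intro bexI[of _ w]) auto
qed

lemma dist_eq_if_equidistant_from_core:
  assumes "i \<in> I" "a \<in> HV" "a \<notin> emb i ` (V i - \<iota> i ` VJ)"
    and "x \<in> V i" "x \<notin> \<iota> i ` VJ" "y \<in> V i" "y \<notin> \<iota> i ` VJ"
    and equidistant: "\<And>w. w \<in> VJ \<Longrightarrow> dist (V i) (E i) (\<iota> i w) x = dist (V i) (E i) (\<iota> i w) y"
  shows "dist HV HE a (emb i x) = dist HV HE a (emb i y)"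
proof -
  have le: "dist HV HE a (emb i x') \<le> dist HV HE a (emb i y')"
    if x': "x' \<in> V i" and y': "y' \<in> V i" "y' \<notin> \<iota> i ` VJ"
      and eq: "\<And>w. w \<in> VJ \<Longrightarrow> dist (V i) (E i) (\<iota> i w) x' = dist (V i) (E i) (\<iota> i w) y'"
    for x' y'
  proof -
    obtain w where "w \<in> VJ"
      "dist HV HE a (Inl w) + dist (V i) (E i) (\<iota> i w) y' \<le> dist HV HE a (emb i y')"
      using dist_private_lower[OF assms(1-3) y'] by blast
    then show ?thesis
      using dist_private_upper[OF assms(1,2) \<open>w \<in> VJ\<close> x'] eq by simp
  qed
  show ?thesis
    using le[OF assms(4,6,7) equidistant] le[OF assms(6,4,5) equidistant[symmetric]] by simp
qed

end

theorem lemma1: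
  fixes I :: "'i set" and V :: "'i \<Rightarrow> 'v set" and E :: "'i \<Rightarrow> ('v \<times> 'v) set"
    and VJ :: "'j set" and EJ :: "('j \<times> 'j) set" and \<iota> :: "'i \<Rightarrow> 'j \<Rightarrow> 'v"
    and i :: 'i and a :: "'j + ('i \<times> 'v)" and u v :: 'v
  assumes "finite I"
    and "connected_graph VJ EJ"
    and "\<And>k. k \<in> I \<Longrightarrow> connected_graph (V k) (E k)"
    and "\<And>k. k \<in> I \<Longrightarrow> inj_on (\<iota> k) VJ \<and> \<iota> k ` VJ \<subseteq> V k"
    and "\<And>k x y. k \<in> I \<Longrightarrow> x \<in> VJ \<Longrightarrow> y \<in> VJ \<Longrightarrow>
           ((\<iota> k x, \<iota> k y) \<in> E k \<longleftrightarrow> (x, y) \<in> EJ)"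
    and "i \<in> I"
    and "a \<in> amalg_V I V VJ \<iota>"
    and "(u, v) \<in> par_edges VJ (\<iota> i) (V i) (E i)"
    and "dist (amalg_V I V VJ \<iota>) (amalg_E I E VJ \<iota>) a (amalg_emb VJ \<iota> i u)
         \<noteq> dist (amalg_V I V VJ \<iota>) (amalg_E I E VJ \<iota>) a (amalg_emb VJ \<iota> i v)"
  shows "a \<in> amalg_emb VJ \<iota> i ` (V i - \<iota> i ` VJ)"
proof (rule ccontr)
  assume outside: "a \<notin> amalg_emb VJ \<iota> i ` (V i - \<iota> i ` VJ)"
  interpret amalgamation I V E VJ \<iota>
    using assms(2-4) by unfold_locales (auto simp: connected_graph_def)
  have "(u, v) \<in> E i" "u \<notin> \<iota> i ` VJ" "v \<notin> \<iota> i ` VJ"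
    and equidistant: "\<And>w. w \<in> VJ \<Longrightarrow> dist (V i) (E i) (\<iota> i w) u = dist (V i) (E i) (\<iota> i w) v"
    using assms(8) unfolding par_edges_def by auto
  then show False
    using dist_eq_if_equidistant_from_core[OF assms(6,7) outside] edges_in_V[OF assms(6)] assms(9)
    by blast
qed

end
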